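(* Let $\pi$ be a model with data space $Y$ and parameter space $\Theta$, $f$ a test quantity and $\phi$ a posterior family such that neither $\pi$ nor $\phi$ has ties with respect to $f$. Then $\phi$ passes continuous SBC with respect to $f$ if and only if for all $x\in[0,1]$ $$\int_Y\int_\Theta \mathbb{I}\Big[\int_\Theta \mathbb{I}[f(\theta,y)<f(\tilde\theta,y)]\,\phi(\theta\mid y)\,\mathrm{d}\theta\le x\Big]\,\pi_{\text{obs}}(y\mid\tilde\theta)\pi_{\text{prior}}(\tilde\theta)\,\mathrm{d}\tilde\theta\,\mathrm{d}y=x.$$
   Context: Model $\pi$: prior density $\pi_{\text{prior}}(\theta)$ on $\Theta$, observation density $\pi_{\text{obs}}(y\mid\theta)$ on $Y$, $\pi_{\text{marg}}(y)=\int_\Theta\pi_{\text{obs}}(y\mid\theta)\pi_{\text{prior}}(\theta)\,\mathrm{d}\theta$, $\pi_{\text{post}}(\theta\mid y)=\pi_{\text{obs}}(y\mid\theta)\pi_{\text{prior}}(\theta)/\pi_{\text{marg}}(y)$. A posterior family is $\phi:\Theta\times Y\to\mathbb{R}^+$ with $\int_\Theta\phi(\theta\mid y)\,\mathrm{d}\theta=1$ for all $y$; a test quantity is a measurable $f:\Theta\times Y\to\mathbb{R}$. $C_{\phi,f}(s\mid y)=\int_\Theta\mathbb{I}[f(\theta,y)\le s]\phi(\theta\mid y)\,\mathrm{d}\theta$, $D_{\phi,f}(s\mid y)=\int_\Theta\mathbb{I}[f(\theta,y)=s]\phi(\theta\mid y)\,\mathrm{d}\theta$, $D_f(s\mid y)=\int_\Theta\mathbb{I}[f(\theta,y)=s]\pi_{\text{post}}(\theta\mid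 y)\,\mathrm{d}\theta$. $\pi$ has ties w.r.t. $f$ if $D_f(f(\tilde\theta,y)\mid y)>0$ for some $y,\tilde\theta$; $\phi$ has ties w.r.t. $f$ if $D_{\phi,f}(f(\tilde\theta,y)\mid y)>0$ for some $y,\tilde\theta$. With $U\sim\mathrm{uniform}[0,1]$, $r_{\phi,f}(x\mid\tilde\theta,y)=\Pr\big(C_{\phi,f}(f(\tilde\theta,y)\mid y)-U\,D_{\phi,f}(f(\tilde\theta,y)\mid y)\le x\big)$, $q_{\phi,f}(x\mid y)=\int_\Theta\pi_{\text{post}}(\tilde\theta\mid y)r_{\phi,f}(x\mid\tilde\theta,y)\,\mathrm{d}\tilde\theta$. $\phi$ passes continuous SBC w.r.t. $f$ if $\int_Yq_{\phi,f}(x\mid y)\pi_{\text{marg}}(y)\,\mathrm{d}y=x$ for all $x\in[0,1]$. *)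

theory Defs
  imports "HOL-Probability.Probability"
begin

text \<open>Reference measures: MT on the parameter space Theta, MY on the data space Y.
  Densities are written as functions: prior th = pi_prior(th), obs y th = pi_obs(y | th),
  phi th y = phi(th | y), f th y = f(th, y).\<close>

definition is_model :: "'t measure \<Rightarrow> 'y measure \<Rightarrow> ('t \<Rightarrow> real) \<Rightarrow> ('y \<Rightarrow> 't \<Rightarrow> real) \<Rightarrow> bool" where
  "is_model MT MY prior obs \<longleftrightarrow>
     sigma_finite_measure MT \<and> sigma_finite_measure MY \<and>
     prior \<in> borel_measurable MT \<and> (\<forall>th\<in>space MT. prior th \<ge> 0) \<and>
     (\<integral>\<^sup>+ th. ennreal (prior th) \<partial>MT) = 1 \<and>
     (\<lambda>(y, th). obs y th) \<in> borel_measurable (MY \<Otimes>\<^sub>M MT) \<and>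
     (\<forall>y\<in>space MY. \<forall>th\<in>space MT. obs y th \<ge> 0) \<and>
     (\<forall>th\<in>space MT. (\<integral>\<^sup>+ y. ennreal (obs y th) \<partial>MY) = 1)"

definition is_posterior_family :: "'t measure \<Rightarrow> 'y measure \<Rightarrow> ('t \<Rightarrow> 'y \<Rightarrow> real) \<Rightarrow> bool" where
  "is_posterior_family MT MY phi \<longleftrightarrow>
     (\<lambda>(th, y). phi th y) \<in> borel_measurable (MT \<Otimes>\<^sub>M MY) \<and>
     (\<forall>th\<in>space MT. \<forall>y\<in>space MY. phi th y \<ge> 0) \<and>
     (\<forall>y\<in>space MY. (\<integral>\<^sup>+ th. ennreal (phi th y) \<partial>MT) = 1)"

definition is_test_quantity :: "'t measure \<Rightarrow> 'y measure \<Rightarrow> ('t \<Rightarrow> 'y \<Rightarrow> real) \<Rightarrow> bool" where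
  "is_test_quantity MT MY f \<longleftrightarrow> (\<lambda>(th, y). f th y) \<in> borel_measurable (MT \<Otimes>\<^sub>M MY)"

definition marg :: "'t measure \<Rightarrow> ('t \<Rightarrow> real) \<Rightarrow> ('y \<Rightarrow> 't \<Rightarrow> real) \<Rightarrow> 'y \<Rightarrow> real" where
  "marg MT prior obs y = (\<integral> th. obs y th * prior th \<partial>MT)"

definition post :: "'t measure \<Rightarrow> ('t \<Rightarrow> real) \<Rightarrow> ('y \<Rightarrow> 't \<Rightarrow> real) \<Rightarrow> 't \<Rightarrow> 'y \<Rightarrow> real" where
  "post MT prior obs th y = obs y th * prior th / marg MT prior obs y"

definition Ccdf :: "'t measure \<Rightarrow> ('t \<Rightarrow> 'y \<Rightarrow> real) \<Rightarrow> ('t \<Rightarrow> 'y \<Rightarrow> real) \<Rightarrow> real \<Rightarrow> 'y \<Rightarrow> real" where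
  "Ccdf MT phi f s y = (\<integral> th. indicator {th. f th y \<le> s} th * phi th y \<partial>MT)"

definition Dmass :: "'t measure \<Rightarrow> ('t \<Rightarrow> 'y \<Rightarrow> real) \<Rightarrow> ('t \<Rightarrow> 'y \<Rightarrow> real) \<Rightarrow> real \<Rightarrow> 'y \<Rightarrow> real" where
  "Dmass MT phi f s y = (\<integral> th. indicator {th. f th y = s} th * phi th y \<partial>MT)"

definition model_has_ties :: "'t measure \<Rightarrow> 'y measure \<Rightarrow> ('t \<Rightarrow> real) \<Rightarrow> ('y \<Rightarrow> 't \<Rightarrow> real) \<Rightarrow> ('t \<Rightarrow> 'y \<Rightarrow> real) \<Rightarrow> bool" where
  "model_has_ties MT MY prior obs f \<longleftrightarrow>
     (\<exists>y\<in>space MY. \<exists>th'\<in>space MT. Dmass MT (post MT prior obs) f (f th' y) y > 0)"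

definition family_has_ties :: "'t measure \<Rightarrow> 'y measure \<Rightarrow> ('t \<Rightarrow> 'y \<Rightarrow> real) \<Rightarrow> ('t \<Rightarrow> 'y \<Rightarrow> real) \<Rightarrow> bool" where
  "family_has_ties MT MY phi f \<longleftrightarrow>
     (\<exists>y\<in>space MY. \<exists>th'\<in>space MT. Dmass MT phi f (f th' y) y > 0)"

text \<open>r_{phi,f}(x | th', y) = Pr(C - U D <= x), U ~ uniform[0,1] (Lebesgue measure on [0,1]).\<close>
definition rank_cdf :: "'t measure \<Rightarrow> ('t \<Rightarrow> 'y \<Rightarrow> real) \<Rightarrow> ('t \<Rightarrow> 'y \<Rightarrow> real) \<Rightarrow> real \<Rightarrow> 't \<Rightarrow> 'y \<Rightarrow> real" where
  "rank_cdf MT phi f x th' y =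
     measure lborel {u \<in> {0..1::real}.
        Ccdf MT phi f (f th' y) y - u * Dmass MT phi f (f th' y) y \<le> x}"

definition qfun :: "'t measure \<Rightarrow> ('t \<Rightarrow> real) \<Rightarrow> ('y \<Rightarrow> 't \<Rightarrow> real) \<Rightarrow> ('t \<Rightarrow> 'y \<Rightarrow> real) \<Rightarrow> ('t \<Rightarrow> 'y \<Rightarrow> real) \<Rightarrow> real \<Rightarrow> 'y \<Rightarrow> real" where
  "qfun MT prior obs phi f x y = (\<integral> th'. post MT prior obs th' y * rank_cdf MT phi f x th' y \<partial>MT)"

definition passes_continuous_SBC :: "'t measure \<Rightarrow> 'y measure \<Rightarrow> ('t \<Rightarrow> real) \<Rightarrow> ('y \<Rightarrow> 't \<Rightarrow> real) \<Rightarrow> ('t \<Rightarrow> 'y \<Rightarrow> real) \<Rightarrow> ('t \<Rightarrow> 'y \<Rightarrow> real) \<Rightarrow> bool" where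
  "passes_continuous_SBC MT MY prior obs phi f \<longleftrightarrow>
     (\<forall>x\<in>{0..1::real}. (\<integral> y. qfun MT prior obs phi f x y * marg MT prior obs y \<partial>MY) = x)"

end

theory Submission
  imports Defs
begin

text \<open>Without ties of phi the mass D_{phi,f} vanishes, so the randomised rank C - U D is
  deterministic: it is the phi-mass strictly below f(th', y), and r_{phi,f}(x | th', y) is the
  indicator of that mass being at most x. Multiplying q_{phi,f}(x | y) by pi_marg(y) cancels the
  normalisation of the posterior and leaves the integral of this indicator against the joint
  density pi_obs(y | th') pi_prior(th'). Where pi_marg(y) = 0 the division by zero yields zero and
  both sides vanish, provided the joint density is integrable in th'; by Tonelli this holds for
  almost every y, since the joint density has total mass one.\<close>

definition Ccdf_strict :: "'t measure \<Rightarrow> ('t \<Rightarrow> 'y \<Rightarrow> real) \<Rightarrow> ('t \<Rightarrow> 'y \<Rightarrow> real) \<Rightarrow> real \<Rightarrow> 'y \<Rightarrow> real" where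
  "Ccdf_strict MT phi f s y = (\<integral> th. indicator {th. f th y < s} th * phi th y \<partial>MT)"

lemma integral_eq_zero_if_dominated:
  fixes g h :: "'a \<Rightarrow> real"
  assumes g: "integrable M g" "integral\<^sup>L M g = 0"
    and h: "\<And>x. x \<in> space M \<Longrightarrow> \<bar>h x\<bar> \<le> g x"
  shows "integral\<^sup>L M h = 0"
proof (rule integral_eq_zero_AE)
  have "AE x in M. g x = 0"
    using g h by (subst integral_nonneg_eq_0_iff_AE[symmetric]) (auto intro: order_trans[OF abs_ge_zero])
  with AE_space show "AE x in M. h x = 0"
    by eventually_elim (metis h abs_le_zero_iff)
qed

lemma measurable_posterior_family:
  assumes "is_posterior_family MT MY phi" "y \<in> space MY"
  shows "(\<lambda>th. phi th y) \<in> borel_measurable MT"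
  using measurable_compose[OF measurable_Pair2'[OF assms(2)], of "\<lambda>(th, y). phi th y"] assms(1)
  by (simp add: is_posterior_family_def)

lemma integrable_posterior_family:
  assumes "is_posterior_family MT MY phi" "y \<in> space MY"
  shows "integrable MT (\<lambda>th. phi th y)"
  using assms measurable_posterior_family[OF assms]
  by (intro integrableI_nonneg) (auto simp: is_posterior_family_def)

lemma measurable_test_quantity:
  assumes "is_test_quantity MT MY f" "y \<in> space MY"
  shows "(\<lambda>th. f th y) \<in> borel_measurable MT"
  using measurable_compose[OF measurable_Pair2'[OF assms(2)], of "\<lambda>(th, y). f th y"] assms(1)
  by (simp add: is_test_quantity_def)

lemma Ccdf_eq_Ccdf_strict_plus_Dmass:
  assumes f: "(\<lambda>th. f th y) \<in> borel_measurable MT" and phi: "integrable MT (\<lambda>th. phi th y)"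
  shows "Ccdf MT phi f s y = Ccdf_strict MT phi f s y + Dmass MT phi f s y"
proof -
  note f[measurable] borel_measurable_integrable[OF phi, measurable]
  have "Ccdf MT phi f s y = (\<integral> th. indicator {th. f th y < s} th * phi th y
      + indicator {th. f th y = s} th * phi th y \<partial>MT)"
    unfolding Ccdf_def by (rule Bochner_Integration.integral_cong) (auto simp: indicator_def)
  also have "\<dots> = Ccdf_strict MT phi f s y + Dmass MT phi f s y"
    unfolding Ccdf_strict_def Dmass_def
    by (intro Bochner_Integration.integral_add Bochner_Integration.integrable_bound[OF phi])
       (auto split: split_indicator)
  finally show ?thesis .
qed

lemma rank_cdf_if_Dmass_eq_zero:
  assumes "Dmass MT phi f (f th' y) y = 0"
  shows "rank_cdf MT phi f x th' y = (if Ccdf MT phi f (f th' y) y \<le> x then 1 else 0)"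
proof -
  have "{u \<in> {0..1::real}. Ccdf MT phi f (f th' y) y - u * Dmass MT phi f (f th' y) y \<le> x}
      = (if Ccdf MT phi f (f th' y) y \<le> x then {0..1} else {})"
    using assms by auto
  then show ?thesis
    by (simp add: rank_cdf_def)
qed

lemma Dmass_eq_zero_if_no_ties:
  assumes "is_posterior_family MT MY phi" "\<not> family_has_ties MT MY phi f"
    and "y \<in> space MY" "th' \<in> space MT"
  shows "Dmass MT phi f (f th' y) y = 0"
proof -
  have "0 \<le> Dmass MT phi f (f th' y) y"
    unfolding Dmass_def using assms(1,3)
    by (intro Bochner_Integration.integral_nonneg) (auto simp: is_posterior_family_def split: split_indicator)
  then show ?thesis
    using assms(2-4) by (force simp: family_has_ties_def)
qed

lemma rank_cdf_eq_indicator_Ccdf_strict: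
  assumes phi: "is_posterior_family MT MY phi" and f: "is_test_quantity MT MY f"
    and "\<not> family_has_ties MT MY phi f" and y: "y \<in> space MY" and "th' \<in> space MT"
  shows "rank_cdf MT phi f x th' y = indicator {th'. Ccdf_strict MT phi f (f th' y) y \<le> x} th'"
proof -
  have "Ccdf MT phi f (f th' y) y = Ccdf_strict MT phi f (f th' y) y + Dmass MT phi f (f th' y) y"
    using measurable_test_quantity[OF f y] integrable_posterior_family[OF phi y]
    by (rule Ccdf_eq_Ccdf_strict_plus_Dmass)
  with Dmass_eq_zero_if_no_ties[OF phi assms(3-5)] show ?thesis
    by (simp add: rank_cdf_if_Dmass_eq_zero)
qed

lemma borel_measurable_Ccdf_strict:
  fixes phi f :: "'t \<Rightarrow> 'y \<Rightarrow> real"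
  assumes "sigma_finite_measure MT" "is_posterior_family MT MY phi" "is_test_quantity MT MY f"
  shows "(\<lambda>(y, th'). Ccdf_strict MT phi f (f th' y) y) \<in> borel_measurable (MY \<Otimes>\<^sub>M MT)"
proof -
  interpret sigma_finite_measure MT by fact
  have [measurable]: "(\<lambda>(th, y). phi th y) \<in> borel_measurable (MT \<Otimes>\<^sub>M MY)"
    "(\<lambda>(th, y). f th y) \<in> borel_measurable (MT \<Otimes>\<^sub>M MY)"
    using assms(2,3) by (simp_all add: is_posterior_family_def is_test_quantity_def)
  show ?thesis
    using borel_measurable_lebesgue_integral[of
        "\<lambda>p th. indicator {th. f th (fst p) < f (snd p) (fst p)} th * phi th (fst p)" "MY \<Otimes>\<^sub>M MT"]
    by (simp add: Ccdf_strict_def split_beta' indicator_def)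
qed

lemma AE_integrable_joint_density:
  assumes "is_model MT MY prior obs"
  shows "AE y in MY. integrable MT (\<lambda>th. obs y th * prior th)"
proof -
  interpret MT: sigma_finite_measure MT
    using assms by (simp add: is_model_def)
  interpret pair_sigma_finite MY MT
    using assms by (simp add: is_model_def pair_sigma_finite_def)
  have [measurable]: "prior \<in> borel_measurable MT" "(\<lambda>(y, th). obs y th) \<in> borel_measurable (MY \<Otimes>\<^sub>M MT)"
    and prior: "\<And>th. th \<in> space MT \<Longrightarrow> 0 \<le> prior th" "(\<integral>\<^sup>+ th. ennreal (prior th) \<partial>MT) = 1"
    and obs: "\<And>y th. y \<in> space MY \<Longrightarrow> th \<in> space MT \<Longrightarrow> 0 \<le> obs y th"
      "\<And>th. th \<in> space MT \<Longrightarrow> (\<integral>\<^sup>+ y. ennreal (obs y th) \<partial>MY) = 1"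
    using assms by (auto simp: is_model_def)
  have "(\<integral>\<^sup>+ y. (\<integral>\<^sup>+ th. ennreal (obs y th * prior th) \<partial>MT) \<partial>MY)
      = (\<integral>\<^sup>+ th. (\<integral>\<^sup>+ y. ennreal (obs y th) * ennreal (prior th) \<partial>MY) \<partial>MT)"
    by (subst Fubini') (auto intro!: nn_integral_cong simp: ennreal_mult prior obs)
  also have "\<dots> = (\<integral>\<^sup>+ th. ennreal (prior th) \<partial>MT)"
    by (intro nn_integral_cong) (simp add: nn_integral_multc obs measurable_Pair1')
  finally have "(\<integral>\<^sup>+ y. (\<integral>\<^sup>+ th. ennreal (obs y th * prior th) \<partial>MT) \<partial>MY) \<noteq> \<infinity>"
    using prior by simp
  then have "AE y in MY. (\<integral>\<^sup>+ th. ennreal (obs y th * prior th) \<partial>MT) \<noteq> \<infinity>"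
    by (intro nn_integral_PInf_AE) measurable
  with AE_space show ?thesis
  proof eventually_elim
    case (elim y)
    then show ?case
      by (intro integrableI_nonneg) (auto simp: less_top prior obs measurable_Pair1')
  qed
qed

lemma borel_measurable_marg:
  assumes "is_model MT MY prior obs"
  shows "marg MT prior obs \<in> borel_measurable MY"
proof -
  interpret sigma_finite_measure MT
    using assms by (simp add: is_model_def)
  have [measurable]: "prior \<in> borel_measurable MT" "(\<lambda>(y, th). obs y th) \<in> borel_measurable (MY \<Otimes>\<^sub>M MT)"
    using assms by (auto simp: is_model_def)
  show ?thesis
    unfolding marg_def[abs_def] by measurable
qed

lemma integral_div_marg_mult_marg:
  fixes g :: "'t \<Rightarrow> real"
  assumes "integrable MT (\<lambda>th. obs y th * prior th)"
    and "\<And>th. th \<in> space MT \<Longrightarrow> 0 \<le> obs y th * prior th"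
    and "\<And>th. th \<in> space MT \<Longrightarrow> \<bar>g th\<bar> \<le> 1"
  shows "(\<integral> th. g th * obs y th * prior th \<partial>MT) / marg MT prior obs y * marg MT prior obs y
       = (\<integral> th. g th * obs y th * prior th \<partial>MT)"
proof (cases "marg MT prior obs y = 0")
  case True
  have dominated: "\<bar>g th * obs y th * prior th\<bar> \<le> obs y th * prior th" if "th \<in> space MT" for th
  proof -
    have "\<bar>g th * obs y th * prior th\<bar> = \<bar>g th\<bar> * (obs y th * prior th)"
      using abs_mult_pos[OF assms(2)[OF that], of "g th"] by (simp add: mult.assoc)
    also have "\<dots> \<le> obs y th * prior th"
      using assms(2,3)[OF that] by (rule mult_left_le_one_le[OF _ abs_ge_zero])
    finally show ?thesis .
  qed
  have "(\<integral> th. g th * obs y th * prior th \<partial>MT) = 0"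
    using assms(1) True[unfolded marg_def] dominated by (rule integral_eq_zero_if_dominated)
  then show ?thesis by simp
qed simp

lemma qfun_eq_integral_div_marg:
  "qfun MT prior obs phi f x y
    = (\<integral> th'. rank_cdf MT phi f x th' y * obs y th' * prior th' \<partial>MT) / marg MT prior obs y"
proof -
  have "qfun MT prior obs phi f x y
      = (\<integral> th'. rank_cdf MT phi f x th' y * obs y th' * prior th' / marg MT prior obs y \<partial>MT)"
    unfolding qfun_def post_def by (rule Bochner_Integration.integral_cong) simp_all
  then show ?thesis by simp
qed

lemma qfun_eq_integral_Ccdf_strict_div_marg:
  assumes "is_posterior_family MT MY phi" "is_test_quantity MT MY f"
    and "\<not> family_has_ties MT MY phi f" and "y \<in> space MY"
  shows "qfun MT prior obs phi f x y
    = (\<integral> th'. indicator {th'. Ccdf_strict MT phi f (f th' y) y \<le> x} th' * obs y th' * prior th' \<partial>MT)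
      / marg MT prior obs y"
  unfolding qfun_eq_integral_div_marg
  using rank_cdf_eq_indicator_Ccdf_strict[OF assms]
  by (simp cong: Bochner_Integration.integral_cong)

lemma integral_qfun_mult_marg_eq:
  fixes phi f :: "'t \<Rightarrow> 'y \<Rightarrow> real"
  assumes model: "is_model MT MY prior obs" and phi: "is_posterior_family MT MY phi"
    and f: "is_test_quantity MT MY f" and no_ties: "\<not> family_has_ties MT MY phi f"
  shows "(\<integral> y. qfun MT prior obs phi f x y * marg MT prior obs y \<partial>MY)
    = (\<integral> y. (\<integral> th'. indicator {th'. Ccdf_strict MT phi f (f th' y) y \<le> x} th'
                  * obs y th' * prior th' \<partial>MT) \<partial>MY)"
    (is "_ = (\<integral> y. ?J y \<partial>MY)")
proof (rule integral_cong_AE)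
  interpret sigma_finite_measure MT
    using model by (simp add: is_model_def)
  have [measurable]: "prior \<in> borel_measurable MT" "(\<lambda>(y, th). obs y th) \<in> borel_measurable (MY \<Otimes>\<^sub>M MT)"
    and nonneg: "\<And>y th. y \<in> space MY \<Longrightarrow> th \<in> space MT \<Longrightarrow> 0 \<le> obs y th * prior th"
    using model by (auto simp: is_model_def)
  note borel_measurable_Ccdf_strict[OF sigma_finite_measure_axioms phi f, measurable]
  have q: "qfun MT prior obs phi f x y = ?J y / marg MT prior obs y" if "y \<in> space MY" for y
    using qfun_eq_integral_Ccdf_strict_div_marg[OF phi f no_ties that] .
  show "?J \<in> borel_measurable MY"
    by measurable
  then show "(\<lambda>y. qfun MT prior obs phi f x y * marg MT prior obs y) \<in> borel_measurable MY"
    using borel_measurable_marg[OF model]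
    by (subst measurable_cong[where g="\<lambda>y. ?J y / marg MT prior obs y * marg MT prior obs y"]) (auto simp: q)
  from AE_integrable_joint_density[OF model] AE_space
  show "AE y in MY. qfun MT prior obs phi f x y * marg MT prior obs y = ?J y"
  proof eventually_elim
    case (elim y)
    have "?J y / marg MT prior obs y * marg MT prior obs y = ?J y"
      by (rule integral_div_marg_mult_marg) (use elim nonneg in \<open>auto split: split_indicator\<close>)
    with elim show ?case
      by (simp add: q)
  qed
qed

theorem mainTheorem13:
  fixes MT :: "'t measure" and MY :: "'y measure"
    and prior :: "'t \<Rightarrow> real" and obs :: "'y \<Rightarrow> 't \<Rightarrow> real"
    and phi :: "'t \<Rightarrow> 'y \<Rightarrow> real" and f :: "'t \<Rightarrow> 'y \<Rightarrow> real"
  assumes "is_model MT MY prior obs"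
    and "is_posterior_family MT MY phi"
    and "is_test_quantity MT MY f"
    and "\<not> model_has_ties MT MY prior obs f"
    and "\<not> family_has_ties MT MY phi f"
  shows "passes_continuous_SBC MT MY prior obs phi f \<longleftrightarrow>
    (\<forall>x\<in>{0..1::real}.
      (\<integral> y. (\<integral> th'. indicator
                 {th'. (\<integral> th. indicator {th. f th y < f th' y} th * phi th y \<partial>MT) \<le> x} th'
               * obs y th' * prior th' \<partial>MT) \<partial>MY) = x)"
  unfolding passes_continuous_SBC_def integral_qfun_mult_marg_eq[OF assms(1-3,5)] Ccdf_strict_def ..

end
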